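(* Work in Cramér's random model: let $\mathcal{P}$ be a random subset of the integers $\ge 3$ in which each integer $m \ge 3$ is included independently with probability $1/\ln m$, and let $q_1 < q_2 < \cdots$ be the elements of $\mathcal{P}$ listed in increasing order. For $n,k \ge 1$ put $T_k(n) = q_n + q_{n+1} + \cdots + q_{n+k-1}$. Then, with probability $1$, for every $n \ge 1$ there exists an odd integer $k \ge 3$ such that $T_k(n) \in \mathcal{P}$. Equivalently, the probability that there exists $n$ such that $T_k(n) \notin \mathcal{P}$ for all odd $k \ge 3$ is zero.
   Context: Cramér's probabilistic model of the primes replaces the set of primes by a random set in which each integer $m\ge 3$ is declared "prime" independently with probability $1/\ln m$, where $\ln$ is the natural logarithm. The sums $T_k(n)$ are the model analogue of sums of $k$ consecutive primes starting at the $n$-th prime. *)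

theory Defs
  imports "HOL-Probability.Probability" "HOL-Library.Infinite_Set"
begin

definition cramer_set :: "(nat \<Rightarrow> 'a \<Rightarrow> bool) \<Rightarrow> 'a \<Rightarrow> nat set" where
  "cramer_set X \<omega> = {m. 3 \<le> m \<and> X m \<omega>}"

text \<open>q_n, the n-th element (1-indexed) of the set in increasing order.\<close>
definition cramer_q :: "nat set \<Rightarrow> nat \<Rightarrow> nat" where
  "cramer_q P n = enumerate P (n - 1)"

definition cramer_T :: "nat set \<Rightarrow> nat \<Rightarrow> nat \<Rightarrow> nat" where
  "cramer_T P k n = (\<Sum>i<k. cramer_q P (n + i))"

end

theory Submission
  imports Defs
begin

text \<open>
  For odd k, the event that T_k(n) = t and that none of T_3(n), T_5(n), ..., T_k(n) lies
  in P is the intersection of an event that depends only on P below t (T_k(n) = t and the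
  earlier sums avoid P) with the event that t is not in P, which is independent of it and has
  probability 1 - 1/ln t. Summing over t, each further odd k multiplies the probability that all
  these sums avoid P by at most 1 - 1/ln t_max, where t_max bounds T_k(n). By Borel-Cantelli,
  almost surely every block [i^6, (i+1)^6) with i large meets P, so that eventually
  T_k(n) <= k^8; under this growth condition the factors are at most 1 - 1/(8 ln k), and since
  the sum of 1/ln k over odd k diverges, their product tends to 0.
\<close>

section \<open>Enumerating initial segments\<close>

lemma enumerate_0_Int_lessThan:
  fixes S :: "'a::wellorder set"
  assumes "0 < card (S \<inter> {..<s})"
  shows "enumerate (S \<inter> {..<s}) 0 = enumerate S 0"
proof -
  have "S \<inter> {..<s} \<noteq> {}"
    using assms by auto
  then obtain x where "x \<in> S" "x < s"
    by blast
  have "(LEAST y. y \<in> S \<and> y < s) = (LEAST y. y \<in> S)"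
  proof (rule Least_equality)
    show "(LEAST y. y \<in> S) \<in> S \<and> (LEAST y. y \<in> S) < s"
      using \<open>x \<in> S\<close> \<open>x < s\<close> by (meson LeastI Least_le le_less_trans)
  qed (simp add: Least_le)
  then show ?thesis
    by (simp add: enumerate_0)
qed

text \<open>Unlike finite_enumerate_initial_segment, this allows S to be infinite.\<close>

lemma enumerate_Int_lessThan:
  fixes S :: "'a::wellorder set"
  assumes "n < card (S \<inter> {..<s})"
  shows "enumerate (S \<inter> {..<s}) n = enumerate S n"
  using assms
proof (induction n arbitrary: S)
  case 0
  then show ?case
    by (rule enumerate_0_Int_lessThan)
next
  case (Suc n)
  let ?L = "enumerate S 0"
  have fin: "finite (S \<inter> {..<s})"
    using Suc.prems by (intro card_ge_0_finite) simp
  have L: "enumerate (S \<inter> {..<s}) 0 = ?L"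
    using Suc.prems by (intro enumerate_0_Int_lessThan) simp
  then have "?L \<in> S \<inter> {..<s}"
    using Suc.prems finite_enumerate_in_set[OF fin, of 0] by simp
  moreover have eq: "(S \<inter> {..<s}) - {?L} = (S - {?L}) \<inter> {..<s}"
    by auto
  ultimately have card: "n < card ((S - {?L}) \<inter> {..<s})"
    using Suc.prems fin by (simp flip: eq)
  have "enumerate (S \<inter> {..<s}) (Suc n) = enumerate ((S \<inter> {..<s}) - {?L}) n"
    by (simp only: enumerate_Suc' L)
  also have "\<dots> = enumerate ((S - {?L}) \<inter> {..<s}) n"
    by (simp only: eq)
  also have "\<dots> = enumerate (S - {?L}) n"
    by (rule Suc.IH[OF card])
  also have "\<dots> = enumerate S (Suc n)"
    by (simp only: enumerate_Suc')
  finally show ?case .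
qed

lemma
  fixes S :: "'a::wellorder set"
  assumes "n < card (S \<inter> {..<s})"
  shows enumerate_lessThan_in: "enumerate S n \<in> S"
    and enumerate_lessThan_less: "enumerate S n < s"
proof -
  have "finite (S \<inter> {..<s})"
    using assms by (intro card_ge_0_finite) simp
  then have "enumerate (S \<inter> {..<s}) n \<in> S \<inter> {..<s}"
    using assms by (rule finite_enumerate_in_set)
  then show "enumerate S n \<in> S" "enumerate S n < s"
    using enumerate_Int_lessThan[OF assms] by auto
qed

lemma enumerate_lessThan_mono:
  fixes S :: "'a::wellorder set"
  assumes "m < n" "n < card (S \<inter> {..<s})"
  shows "enumerate S m < enumerate S n"
proof -
  have "finite (S \<inter> {..<s})"
    using assms by (intro card_ge_0_finite) simp
  then have "enumerate (S \<inter> {..<s}) m < enumerate (S \<inter> {..<s}) n"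
    using assms by (intro finite_enumerate_mono)
  then show ?thesis
    using assms by (simp add: enumerate_Int_lessThan)
qed

definition has_at_least :: "nat \<Rightarrow> 'a::wellorder set \<Rightarrow> bool" where
  "has_at_least N S \<longleftrightarrow> (\<exists>s. N \<le> card (S \<inter> {..<s}))"

lemma card_ge_if_strict_mono_on:
  fixes f :: "nat \<Rightarrow> 'a::linorder"
  assumes "strict_mono_on {..<N} f" "f ` {..<N} \<subseteq> A" "finite A"
  shows "N \<le> card A"
  using card_inj_on_le[OF strict_mono_on_imp_inj_on[OF assms(1)] assms(2,3)] by simp

lemma enumerate_eq_if_Int_lessThan_eq:
  fixes S S' :: "nat set"
  assumes S: "has_at_least N S" and below: "\<And>i. i < N \<Longrightarrow> enumerate S i < t"
    and eq: "S \<inter> {..<t} = S' \<inter> {..<t}"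
  shows "has_at_least N S'" and "\<And>i. i < N \<Longrightarrow> enumerate S' i = enumerate S i"
proof -
  obtain s where s: "N \<le> card (S \<inter> {..<s})"
    using S unfolding has_at_least_def by blast
  have N: "N \<le> card (S \<inter> {..<t})"
  proof (rule card_ge_if_strict_mono_on)
    show "strict_mono_on {..<N} (enumerate S)"
      using s by (intro strict_mono_onI enumerate_lessThan_mono[where s = s]) auto
    show "enumerate S ` {..<N} \<subseteq> S \<inter> {..<t}"
      using s below by (auto intro: enumerate_lessThan_in[where s = s])
  qed simp
  then show "has_at_least N S'"
    unfolding has_at_least_def eq by blast
  fix i assume "i < N"
  then show "enumerate S' i = enumerate S i"
    using N enumerate_Int_lessThan[of i S t] enumerate_Int_lessThan[of i S' t] eq by simp
qed

section \<open>Consecutive sums that avoid a set\<close>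

lemma cramer_q_eq_enumerate: "1 \<le> n \<Longrightarrow> cramer_q P (n + i) = enumerate P (n - 1 + i)"
  unfolding cramer_q_def by (simp add: algebra_simps)

lemma cramer_T_Suc: "cramer_T P (Suc k) n = cramer_T P k n + cramer_q P (n + k)"
  by (simp add: cramer_T_def)

lemma cramer_q_le_T: "i < k \<Longrightarrow> cramer_q P (n + i) \<le> cramer_T P k n"
  unfolding cramer_T_def by (rule member_le_sum) auto

lemma cramer_T_strict_mono:
  assumes "j < k" "\<And>i. i < k \<Longrightarrow> 0 < cramer_q P (n + i)"
  shows "cramer_T P j n < cramer_T P k n"
  unfolding cramer_T_def using assms by (intro sum_strict_mono2[where b = j]) auto

lemma cramer_q_in:
  assumes "1 \<le> n" "has_at_least (n + k - 1) P" "i < k"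
  shows "cramer_q P (n + i) \<in> P"
proof -
  obtain s where "n + k - 1 \<le> card (P \<inter> {..<s})"
    using assms(2) unfolding has_at_least_def by blast
  then have "enumerate P (n - 1 + i) \<in> P"
    using assms(1,3) by (intro enumerate_lessThan_in[where s = s]) simp
  then show ?thesis
    using cramer_q_eq_enumerate[OF assms(1)] by simp
qed

lemma enumerate_less_cramer_T:
  assumes n: "1 \<le> n" and k: "2 \<le> k" and enough: "has_at_least (n + k - 1) P"
    and P: "0 \<notin> P" and i: "i < n + k - 1"
  shows "enumerate P i < cramer_T P k n"
proof -
  obtain s where s: "n + k - 1 \<le> card (P \<inter> {..<s})"
    using enough unfolding has_at_least_def by blast
  have "cramer_q P (n + 0) \<in> P"
    using k by (intro cramer_q_in[OF n enough]) simp
  then have "0 < cramer_q P n"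
    using P by (metis add_0_right gr_zeroI)
  then have "0 < cramer_T P (k - 1) n"
    using cramer_q_le_T[of 0 "k - 1" P n] k by simp
  then have "cramer_q P (n + (k - 1)) < cramer_T P k n"
    using cramer_T_Suc[of P "k - 1" n] k by simp
  moreover have "cramer_q P (n + (k - 1)) = enumerate P (n + k - 2)"
  proof -
    have "n - 1 + (k - 1) = n + k - 2"
      using n k by arith
    then show ?thesis
      using cramer_q_eq_enumerate[OF n, of P "k - 1"] by simp
  qed
  moreover have "enumerate P i \<le> enumerate P (n + k - 2)"
  proof (cases "i < n + k - 2")
    case True
    moreover have "n + k - 2 < card (P \<inter> {..<s})"
      using s n k by arith
    ultimately show ?thesis
      by (simp add: enumerate_lessThan_mono less_imp_le)
  next
    case False
    then have "i = n + k - 2"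
      using i by linarith
    then show ?thesis
      by simp
  qed
  ultimately show ?thesis
    by linarith
qed

text \<open>
  The clause has_at_least makes q_n, ..., q_(n+k-1) genuine elements of P rather than junk
  values of enumerate. The growth condition for j >= K holds eventually almost surely
  (cramer_T_le_if_meets_blocks) and confines T_k(n) to at most k^8 values.
\<close>

definition sums_avoid :: "nat \<Rightarrow> nat \<Rightarrow> nat \<Rightarrow> nat set \<Rightarrow> bool" where
  "sums_avoid n K k P \<longleftrightarrow> has_at_least (n + k - 1) P
     \<and> (\<forall>j. odd j \<and> 3 \<le> j \<and> j \<le> k \<longrightarrow> cramer_T P j n \<notin> P)
     \<and> (\<forall>j. odd j \<and> K \<le> j \<and> j \<le> k \<longrightarrow> cramer_T P j n \<le> j ^ 8)"

definition sums_avoid_before :: "nat \<Rightarrow> nat \<Rightarrow> nat \<Rightarrow> nat \<Rightarrow> nat set \<Rightarrow> bool" where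
  "sums_avoid_before n K k t P \<longleftrightarrow> has_at_least (n + k - 1) P
     \<and> (\<forall>j. odd j \<and> 3 \<le> j \<and> j < k \<longrightarrow> cramer_T P j n \<notin> P)
     \<and> (\<forall>j. odd j \<and> K \<le> j \<and> j < k \<longrightarrow> cramer_T P j n \<le> j ^ 8)
     \<and> cramer_T P k n = t"

lemma sums_avoid_before_cong:
  assumes n: "1 \<le> n" and k: "2 \<le> k" and P: "0 \<notin> P"
    and before: "sums_avoid_before n K k t P" and eq: "P \<inter> {..<t} = P' \<inter> {..<t}"
  shows "sums_avoid_before n K k t P'"
proof -
  have enough: "has_at_least (n + k - 1) P" and t: "cramer_T P k n = t"
    using before unfolding sums_avoid_before_def by blast+
  note agree = enumerate_eq_if_Int_lessThan_eq[OF enough _ eq]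
  have below: "enumerate P i < t" if "i < n + k - 1" for i
    using enumerate_less_cramer_T[OF n k enough P that] t by simp
  have same_T: "cramer_T P' j n = cramer_T P j n" if "j \<le> k" for j
    unfolding cramer_T_def
    using that n by (intro sum.cong refl) (simp add: cramer_q_eq_enumerate agree(2)[OF below])
  have pos: "0 < cramer_q P (n + i)" if "i < k" for i
    using cramer_q_in[OF n enough that] P by (metis gr_zeroI)
  have "cramer_T P j n \<in> P' \<longleftrightarrow> cramer_T P j n \<in> P" if "j < k" for j
    using cramer_T_strict_mono[OF that pos] t eq by blast
  then show ?thesis
    using before agree(1)[OF below] same_T unfolding sums_avoid_before_def by auto
qed

lemma sums_avoid_before_Int_lessThan:
  assumes "1 \<le> n" "2 \<le> k" "0 \<notin> P"
  shows "sums_avoid_before n K k t (P \<inter> {..<t}) \<longleftrightarrow> sums_avoid_before n K k t P"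
proof
  show "sums_avoid_before n K k t P" if "sums_avoid_before n K k t (P \<inter> {..<t})"
    by (rule sums_avoid_before_cong[OF assms(1,2) _ that]) (use assms(3) in auto)
  show "sums_avoid_before n K k t (P \<inter> {..<t})" if "sums_avoid_before n K k t P"
    by (rule sums_avoid_before_cong[OF assms that]) auto
qed

lemma sums_avoid_iff_ex_before:
  assumes n: "1 \<le> n" and k: "3 \<le> k" "odd k" "K \<le> k" and P: "P \<subseteq> {3..}"
  shows "sums_avoid n K k P \<longleftrightarrow> (\<exists>t\<in>{3..k ^ 8}. sums_avoid_before n K k t P \<and> t \<notin> P)"
proof
  assume avoid: "sums_avoid n K k P"
  let ?t = "cramer_T P k n"
  have "cramer_q P (n + 0) \<in> P"
    using avoid k by (intro cramer_q_in[OF n]) (auto simp: sums_avoid_def)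
  then have "3 \<le> ?t"
    using cramer_q_le_T[of 0 k P n] k P by force
  moreover have "?t \<le> k ^ 8" "?t \<notin> P" "sums_avoid_before n K k ?t P"
    using avoid k unfolding sums_avoid_def sums_avoid_before_def by auto
  ultimately show "\<exists>t\<in>{3..k ^ 8}. sums_avoid_before n K k t P \<and> t \<notin> P"
    by auto
next
  assume "\<exists>t\<in>{3..k ^ 8}. sums_avoid_before n K k t P \<and> t \<notin> P"
  then obtain t where t: "t \<le> k ^ 8" "t \<notin> P" and before: "sums_avoid_before n K k t P"
    by auto
  show "sums_avoid n K k P"
    unfolding sums_avoid_def
  proof (intro conjI allI impI)
    show "has_at_least (n + k - 1) P"
      using before unfolding sums_avoid_before_def by blast
    fix j
    show "cramer_T P j n \<notin> P" if "odd j \<and> 3 \<le> j \<and> j \<le> k"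
      using that before t unfolding sums_avoid_before_def by (cases "j = k") auto
    show "cramer_T P j n \<le> j ^ 8" if "odd j \<and> K \<le> j \<and> j \<le> k"
      using that before t unfolding sums_avoid_before_def by (cases "j = k") auto
  qed
qed

lemma sums_avoid_before_imp_sums_avoid:
  assumes "2 \<le> k" "sums_avoid_before n K k t P"
  shows "sums_avoid n K (k - 2) P"
proof -
  obtain s where "n + k - 1 \<le> card (P \<inter> {..<s})"
    using assms(2) unfolding sums_avoid_before_def has_at_least_def by blast
  then have "has_at_least (n + (k - 2) - 1) P"
    unfolding has_at_least_def by (intro exI[of _ s]) simp
  moreover have "j \<le> k - 2 \<Longrightarrow> j < k" for j
    using assms(1) by arith
  ultimately show ?thesis
    using assms(2) unfolding sums_avoid_def sums_avoid_before_def by blast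
qed

definition meets_blocks_from :: "nat \<Rightarrow> nat set \<Rightarrow> bool" where
  "meets_blocks_from J P \<longleftrightarrow> (\<forall>i\<ge>J. P \<inter> {i ^ 6..<(i + 1) ^ 6} \<noteq> {})"

lemma card_Int_lessThan_if_meets_blocks:
  assumes "meets_blocks_from J P"
  shows "N \<le> card (P \<inter> {..<(J + N) ^ 6})"
proof -
  define f where "f i = (SOME m. m \<in> P \<inter> {(J + i) ^ 6..<(J + i + 1) ^ 6})" for i
  have f: "f i \<in> P \<inter> {(J + i) ^ 6..<(J + i + 1) ^ 6}" for i
  proof -
    have "P \<inter> {(J + i) ^ 6..<(J + i + 1) ^ 6} \<noteq> {}"
      using assms unfolding meets_blocks_from_def by simp
    then have "\<exists>m. m \<in> P \<inter> {(J + i) ^ 6..<(J + i + 1) ^ 6}"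
      by blast
    then show ?thesis
      unfolding f_def by (rule someI_ex)
  qed
  show ?thesis
  proof (rule card_ge_if_strict_mono_on)
    show "strict_mono_on {..<N} f"
    proof (rule strict_mono_onI)
      fix i j :: nat assume "i < j"
      have "f i < (J + i + 1) ^ 6" using f[of i] by simp
      also have "\<dots> \<le> (J + j) ^ 6" using \<open>i < j\<close> by (intro power_mono) auto
      also have "\<dots> \<le> f j" using f[of j] by simp
      finally show "f i < f j" .
    qed
    have "f i < (J + N) ^ 6" if "i < N" for i
    proof -
      have "f i < (J + i + 1) ^ 6"
        using f[of i] by simp
      also have "\<dots> \<le> (J + N) ^ 6"
        using that by (intro power_mono) auto
      finally show ?thesis .
    qed
    then show "f ` {..<N} \<subseteq> P \<inter> {..<(J + N) ^ 6}"
      using f by auto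
  qed simp
qed

lemma infinite_if_meets_blocks:
  assumes "meets_blocks_from J P"
  shows "infinite P"
proof
  assume "finite P"
  then have "card (P \<inter> {..<(J + Suc (card P)) ^ 6}) \<le> card P"
    by (intro card_mono) auto
  then show False
    using card_Int_lessThan_if_meets_blocks[OF assms, of "Suc (card P)"] by simp
qed

lemma has_at_least_if_meets_blocks: "meets_blocks_from J P \<Longrightarrow> has_at_least N P"
  unfolding has_at_least_def using card_Int_lessThan_if_meets_blocks by blast

lemma cramer_T_le_if_meets_blocks:
  assumes blocks: "meets_blocks_from J P" and n: "1 \<le> n" and j: "n + J \<le> j" "64 \<le> j"
  shows "cramer_T P j n \<le> j ^ 8"
proof -
  have q: "cramer_q P (n + i) \<le> (2 * j) ^ 6" if "i < j" for i
  proof -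
    have "n + i \<le> card (P \<inter> {..<(J + (n + i)) ^ 6})"
      by (rule card_Int_lessThan_if_meets_blocks[OF blocks])
    then have "enumerate P (n - 1 + i) < (J + (n + i)) ^ 6"
      using n by (intro enumerate_lessThan_less) simp
    moreover have "(J + (n + i)) ^ 6 \<le> (2 * j) ^ 6"
      using that j by (intro power_mono) auto
    ultimately show ?thesis
      using cramer_q_eq_enumerate[OF n] by simp
  qed
  have "cramer_T P j n \<le> of_nat (card {..<j}) * (2 * j) ^ 6"
    unfolding cramer_T_def by (rule sum_bounded_above) (simp only: lessThan_iff q)
  also have "\<dots> = j * (2 * j) ^ 6"
    by simp
  also have "\<dots> = 64 * j ^ 7"
    by algebra
  also have "\<dots> \<le> j ^ 8"
    using j mult_right_mono[of 64 j "j ^ 7"] by (simp add: eval_nat_numeral)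
  finally show ?thesis .
qed

text \<open>The constant 2 (n + J) + 65 is odd and exceeds both n + J and 64.\<close>

lemma sums_avoid_if_no_sum_in:
  assumes blocks: "meets_blocks_from J P" and n: "1 \<le> n"
    and none: "\<And>j. odd j \<Longrightarrow> 3 \<le> j \<Longrightarrow> cramer_T P j n \<notin> P"
  shows "sums_avoid n (2 * (n + J) + 65) k P"
  unfolding sums_avoid_def
proof (intro conjI allI impI)
  show "has_at_least (n + k - 1) P"
    by (rule has_at_least_if_meets_blocks[OF blocks])
  fix j
  show "cramer_T P j n \<notin> P" if "odd j \<and> 3 \<le> j \<and> j \<le> k"
    using that none by blast
  show "cramer_T P j n \<le> j ^ 8" if "odd j \<and> 2 * (n + J) + 65 \<le> j \<and> j \<le> k"
    using that by (intro cramer_T_le_if_meets_blocks[OF blocks n]) auto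
qed

section \<open>Elementary estimates\<close>

lemma inverse_le_inverse_ln_power:
  fixes x :: real
  assumes "1 < x" "0 < d"
  shows "1 / (real d * x) \<le> 1 / ln (x ^ d)"
proof -
  have "0 < ln (x ^ d)"
    using assms by (simp add: one_less_power)
  moreover have "ln (x ^ d) \<le> real d * x"
    using assms by (simp add: ln_realpow less_imp_le)
  ultimately show ?thesis
    by (intro divide_left_mono) auto
qed

lemma one_le_ln: "3 \<le> x \<Longrightarrow> 1 \<le> ln (x :: real)"
  using exp_le by (subst ln_ge_iff) auto

lemma inverse_ln_antimono:
  fixes x y :: real
  assumes "3 \<le> x" "x \<le> y"
  shows "1 / ln y \<le> 1 / ln x"
  using assms one_le_ln[of x] by (intro divide_left_mono mult_pos_pos) auto

lemma prod_one_minus_le_exp: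
  fixes c :: "'a \<Rightarrow> real"
  assumes "\<And>x. x \<in> A \<Longrightarrow> 0 \<le> c x \<and> c x \<le> 1"
  shows "(\<Prod>x\<in>A. 1 - c x) \<le> exp (- (\<Sum>x\<in>A. c x))"
proof (cases "finite A")
  case True
  have "(\<Prod>x\<in>A. 1 - c x) \<le> (\<Prod>x\<in>A. exp (- c x))"
  proof (rule prod_mono)
    fix x assume "x \<in> A"
    then show "0 \<le> 1 - c x \<and> 1 - c x \<le> exp (- c x)"
      using assms[of x] exp_ge_add_one_self[of "- c x"] by simp
  qed
  also have "\<dots> = exp (- (\<Sum>x\<in>A. c x))"
    using True exp_sum[of A "\<lambda>x. - c x"] by (simp add: sum_negf)
  finally show ?thesis .
qed simp

lemma exp_neg_le_inverse:
  fixes x :: real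
  assumes "0 < x"
  shows "exp (- x) \<le> 1 / x"
proof -
  have "x \<le> exp x"
    using exp_ge_add_one_self[of x] by linarith
  then have "1 / exp x \<le> 1 / x"
    using assms by (intro divide_left_mono) auto
  then show ?thesis
    by (simp add: exp_minus inverse_eq_divide)
qed

lemma power_5_le_card_block: "i ^ 5 \<le> card {i ^ 6..<(i + 1) ^ 6}"
proof -
  have "i ^ 6 + i ^ 5 = (i + 1) * i ^ 5"
    by algebra
  also have "\<dots> \<le> (i + 1) * (i + 1) ^ 5"
    by (intro mult_left_mono power_mono) auto
  also have "\<dots> = (i + 1) ^ 6"
    by algebra
  finally show ?thesis
    by simp
qed

lemma sum_inverse_ln_block_ge:
  assumes "2 \<le> i"
  shows "real i ^ 4 / 12 \<le> (\<Sum>m\<in>{i ^ 6..<(i + 1) ^ 6}. 1 / ln (real m))"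
proof -
  let ?B = "{i ^ 6..<(i + 1) ^ 6}"
  have "(2::nat) ^ 6 \<le> i ^ 6"
    using assms by (intro power_mono) auto
  then have ge3: "3 \<le> real m" if "m \<in> ?B" for m
    using that by simp
  have "real i ^ 4 / 12 = real i ^ 5 * (1 / (12 * real i))"
  proof -
    have "real i ^ 5 = real i ^ 4 * real i"
      by algebra
    then show ?thesis
      using assms by (simp add: field_simps)
  qed
  also have "\<dots> \<le> real (card ?B) * (1 / (12 * real i))"
  proof (rule mult_right_mono)
    show "real i ^ 5 \<le> real (card ?B)"
      using power_5_le_card_block[of i] by (metis of_nat_le_iff of_nat_power)
  qed simp
  also have "\<dots> \<le> (\<Sum>m\<in>?B. 1 / ln (real m))"
  proof (rule sum_bounded_below)
    fix m assume m: "m \<in> ?B"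
    have "real m \<le> (real i + 1) ^ 6"
      using m by (metis atLeastLessThan_iff of_nat_1 of_nat_add of_nat_less_iff of_nat_power less_imp_le)
    then have "1 / ln ((real i + 1) ^ 6) \<le> 1 / ln (real m)"
      using ge3[OF m] by (rule inverse_ln_antimono[rotated])
    moreover have "1 / (6 * (real i + 1)) \<le> 1 / ln ((real i + 1) ^ 6)"
      using assms inverse_le_inverse_ln_power[of "real i + 1" 6] by simp
    moreover have "1 / (12 * real i) \<le> 1 / (6 * (real i + 1))"
      using assms by (intro divide_left_mono) auto
    ultimately show "1 / (12 * real i) \<le> 1 / ln (real m)"
      by linarith
  qed
  finally show ?thesis .
qed

lemma prod_block_le:
  assumes "2 \<le> i"
  shows "(\<Prod>m\<in>{i ^ 6..<(i + 1) ^ 6}. 1 - 1 / ln (real m)) \<le> 12 / real i ^ 2"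
proof -
  let ?B = "{i ^ 6..<(i + 1) ^ 6}"
  have "(\<Prod>m\<in>?B. 1 - 1 / ln (real m)) \<le> exp (- (\<Sum>m\<in>?B. 1 / ln (real m)))"
  proof (rule prod_one_minus_le_exp)
    fix m assume "m \<in> ?B"
    moreover have "(2::nat) ^ 6 \<le> i ^ 6"
      using assms by (intro power_mono) auto
    ultimately have "1 \<le> ln (real m)"
      by (intro one_le_ln) simp
    then show "0 \<le> 1 / ln (real m) \<and> 1 / ln (real m) \<le> 1"
      by simp
  qed
  also have "\<dots> \<le> exp (- (real i ^ 4 / 12))"
    using sum_inverse_ln_block_ge[OF assms] by simp
  also have "\<dots> \<le> 12 / real i ^ 4"
    using assms exp_neg_le_inverse[of "real i ^ 4 / 12"] by simp
  also have "\<dots> \<le> 12 / real i ^ 2"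
    using assms by (intro divide_left_mono power_increasing) auto
  finally show ?thesis .
qed

section \<open>The probabilistic model\<close>

lemma measurable_fun_restrict_count_space:
  fixes X :: "'i \<Rightarrow> 'a \<Rightarrow> 'b::countable"
  assumes "finite A" "\<And>i. i \<in> A \<Longrightarrow> X i \<in> measurable M (count_space UNIV)"
  shows "(\<lambda>\<omega>. g (restrict (\<lambda>i. X i \<omega>) A)) \<in> measurable M (count_space UNIV)"
proof -
  have "(\<lambda>\<omega>. restrict (\<lambda>i. X i \<omega>) A) \<in> measurable M (PiM A (\<lambda>_. count_space UNIV))"
    using assms(2) by (intro measurable_restrict) auto
  moreover have "g \<in> measurable (PiM A (\<lambda>_. count_space UNIV)) (count_space UNIV)"
    using assms(1) by (simp add: count_space_PiM_finite)
  ultimately show ?thesis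
    by (rule measurable_compose)
qed

lemma (in prob_space) indep_var_fun_restrict:
  fixes X :: "'i \<Rightarrow> 'a \<Rightarrow> 'b::countable"
  assumes indep: "indep_vars (\<lambda>_. count_space UNIV) X I"
    and A: "finite A" "A \<subseteq> I" and t: "t \<in> I" "t \<notin> A"
  shows "indep_var (count_space UNIV) (\<lambda>\<omega>. g (restrict (\<lambda>i. X i \<omega>) A)) (count_space UNIV) (X t)"
proof -
  have "indep_var (PiM A (\<lambda>_. count_space UNIV)) (\<lambda>\<omega>. restrict (\<lambda>i. X i \<omega>) A)
      (PiM {t} (\<lambda>_. count_space UNIV)) (\<lambda>\<omega>. restrict (\<lambda>i. X i \<omega>) {t})"
    using A t by (intro indep_var_restrict[OF indep]) auto
  then have "indep_var (count_space UNIV) (g \<circ> (\<lambda>\<omega>. restrict (\<lambda>i. X i \<omega>) A))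
      (count_space UNIV) ((\<lambda>f. f t) \<circ> (\<lambda>\<omega>. restrict (\<lambda>i. X i \<omega>) {t}))"
    by (rule indep_var_compose)
      (simp_all add: A(1) count_space_PiM_finite measurable_component_singleton)
  then show ?thesis
    by (simp add: comp_def)
qed

lemma mem_cramer_set: "m \<in> cramer_set X \<omega> \<longleftrightarrow> 3 \<le> m \<and> X m \<omega>"
  by (simp add: cramer_set_def)

lemma cramer_set_subset: "cramer_set X \<omega> \<subseteq> {3..}"
  by (auto simp: cramer_set_def)

lemma zero_notin_cramer_set: "0 \<notin> cramer_set X \<omega>"
  by (simp add: cramer_set_def)

lemma cramer_set_Int_lessThan:
  "cramer_set X \<omega> \<inter> {..<t} = {m \<in> {3..<t}. restrict (\<lambda>m. X m \<omega>) {3..<t} m}"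
  by (auto simp: cramer_set_def)

locale cramer_model = prob_space M for M :: "'a measure" +
  fixes X :: "nat \<Rightarrow> 'a \<Rightarrow> bool"
  assumes indep: "indep_vars (\<lambda>_. count_space UNIV) X {3..}"
    and prob_X: "\<And>m. 3 \<le> m \<Longrightarrow> prob {\<omega> \<in> space M. X m \<omega>} = 1 / ln (real m)"
begin

lemma measurable_X [measurable]: "3 \<le> m \<Longrightarrow> X m \<in> measurable M (count_space UNIV)"
  using indep unfolding indep_vars_def by simp

lemma prob_not_X:
  assumes "3 \<le> t"
  shows "prob {\<omega> \<in> space M. \<not> X t \<omega>} = 1 - 1 / ln (real t)"
proof -
  have "{\<omega> \<in> space M. \<not> X t \<omega>} = space M - {\<omega> \<in> space M. X t \<omega>}"
    by auto
  moreover have "{\<omega> \<in> space M. X t \<omega>} \<in> events"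
    using assms by measurable
  ultimately show ?thesis
    using prob_compl prob_X[OF assms] by simp
qed

lemma events_prefix: "{\<omega> \<in> space M. \<Phi> (cramer_set X \<omega> \<inter> {..<t})} \<in> events"
proof -
  have "(\<lambda>\<omega>. \<Phi> {m \<in> {3..<t}. restrict (\<lambda>m. X m \<omega>) {3..<t} m}) \<in> measurable M (count_space UNIV)"
    by (rule measurable_fun_restrict_count_space[where g = "\<lambda>f. \<Phi> {m \<in> {3..<t}. f m}"]) auto
  then show ?thesis
    by (simp add: cramer_set_Int_lessThan pred_def)
qed

lemma prob_prefix_not_X:
  assumes "3 \<le> t"
  shows "prob {\<omega> \<in> space M. \<Phi> (cramer_set X \<omega> \<inter> {..<t}) \<and> \<not> X t \<omega>}
    = prob {\<omega> \<in> space M. \<Phi> (cramer_set X \<omega> \<inter> {..<t})} * (1 - 1 / ln (real t))"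
proof -
  have "indep_var (count_space UNIV) (\<lambda>\<omega>. \<Phi> {m \<in> {3..<t}. restrict (\<lambda>m. X m \<omega>) {3..<t} m})
      (count_space UNIV) (X t)"
    using assms
    by (intro indep_var_fun_restrict[OF indep, where g = "\<lambda>f. \<Phi> {m \<in> {3..<t}. f m}"]) auto
  then have "\<P>(\<omega> in M. \<Phi> {m \<in> {3..<t}. restrict (\<lambda>m. X m \<omega>) {3..<t} m} \<in> {True} \<and> X t \<omega> \<in> {False})
    = \<P>(\<omega> in M. \<Phi> {m \<in> {3..<t}. restrict (\<lambda>m. X m \<omega>) {3..<t} m} \<in> {True}) * \<P>(\<omega> in M. X t \<omega> \<in> {False})"
    by (rule prob_indep_random_variable) auto
  then show ?thesis
    using prob_not_X[OF assms] by (simp add: cramer_set_Int_lessThan)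
qed

lemma prob_none_in:
  assumes "finite B" "B \<subseteq> {3..}"
  shows "prob {\<omega> \<in> space M. \<forall>m\<in>B. \<not> X m \<omega>} = (\<Prod>m\<in>B. 1 - 1 / ln (real m))"
proof (cases "B = {}")
  case True
  then show ?thesis by (simp add: prob_space)
next
  case False
  have "prob (\<Inter>m\<in>B. X m -` {False} \<inter> space M) = (\<Prod>m\<in>B. prob (X m -` {False} \<inter> space M))"
    using False assms by (intro indep_varsD[OF indep]) auto
  moreover have "(\<Inter>m\<in>B. X m -` {False} \<inter> space M) = {\<omega> \<in> space M. \<forall>m\<in>B. \<not> X m \<omega>}"
    using False by auto
  moreover have "X m -` {False} \<inter> space M = {\<omega> \<in> space M. \<not> X m \<omega>}" for m
    by auto
  ultimately show ?thesis
    using assms prob_not_X by (auto intro!: prod.cong)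
qed

definition block_empty :: "nat \<Rightarrow> 'a set" where
  "block_empty i = {\<omega> \<in> space M. cramer_set X \<omega> \<inter> {i ^ 6..<(i + 1) ^ 6} = {}}"

lemma events_block_empty: "block_empty i \<in> events"
proof -
  have "cramer_set X \<omega> \<inter> {..<(i + 1) ^ 6} \<inter> {i ^ 6..<(i + 1) ^ 6} = cramer_set X \<omega> \<inter> {i ^ 6..<(i + 1) ^ 6}" for \<omega>
    by auto
  then show ?thesis
    using events_prefix[of "\<lambda>S. S \<inter> {i ^ 6..<(i + 1) ^ 6} = {}" "(i + 1) ^ 6"]
    by (simp add: block_empty_def)
qed

lemma prob_block_empty_le:
  assumes "2 \<le> i"
  shows "prob (block_empty i) \<le> 12 / real i ^ 2"
proof -
  have "(2::nat) ^ 6 \<le> i ^ 6"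
    using assms by (intro power_mono) auto
  then have block: "{i ^ 6..<(i + 1) ^ 6} \<subseteq> {3..}"
    by auto
  then have "block_empty i = {\<omega> \<in> space M. \<forall>m\<in>{i ^ 6..<(i + 1) ^ 6}. \<not> X m \<omega>}"
    unfolding block_empty_def cramer_set_def by blast
  also have "prob \<dots> = (\<Prod>m\<in>{i ^ 6..<(i + 1) ^ 6}. 1 - 1 / ln (real m))"
    using block by (intro prob_none_in) auto
  finally show ?thesis
    using prod_block_le[OF assms] by simp
qed

lemma AE_meets_blocks: "AE \<omega> in M. \<exists>J. meets_blocks_from J (cramer_set X \<omega>)"
proof -
  have "summable (\<lambda>i. prob (block_empty i))"
  proof (rule summable_comparison_test'[where N = 2])
    show "summable (\<lambda>i. 12 * inverse (real i ^ 2))"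
      by (intro summable_mult inverse_power_summable) simp
    show "norm (prob (block_empty i)) \<le> 12 * inverse (real i ^ 2)" if "2 \<le> i" for i
      using prob_block_empty_le[OF that] by (simp add: field_simps)
  qed
  then have "AE \<omega> in M. eventually (\<lambda>i. \<omega> \<in> space M - block_empty i) sequentially"
    using events_block_empty by (intro borel_cantelli_AE1) (auto simp: less_top[symmetric])
  then show ?thesis
    by (rule eventually_mono)
      (auto simp: eventually_sequentially meets_blocks_from_def block_empty_def)
qed

definition avoid_event :: "nat \<Rightarrow> nat \<Rightarrow> nat \<Rightarrow> 'a set" where
  "avoid_event n K k = {\<omega> \<in> space M. sums_avoid n K k (cramer_set X \<omega>)}"

lemma
  assumes "1 \<le> n" "2 \<le> k"
  shows events_avoid_before: "{\<omega> \<in> space M. sums_avoid_before n K k t (cramer_set X \<omega>)} \<in> events"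
    and events_avoid_before_not_X: "3 \<le> t \<Longrightarrow>
      {\<omega> \<in> space M. sums_avoid_before n K k t (cramer_set X \<omega>) \<and> \<not> X t \<omega>} \<in> events"
    and prob_avoid_before_not_X: "3 \<le> t \<Longrightarrow>
      prob {\<omega> \<in> space M. sums_avoid_before n K k t (cramer_set X \<omega>) \<and> \<not> X t \<omega>}
      = prob {\<omega> \<in> space M. sums_avoid_before n K k t (cramer_set X \<omega>)} * (1 - 1 / ln (real t))"
proof -
  have prefix: "sums_avoid_before n K k t (cramer_set X \<omega> \<inter> {..<t}) \<longleftrightarrow>
      sums_avoid_before n K k t (cramer_set X \<omega>)" for \<omega>
    using assms zero_notin_cramer_set by (rule sums_avoid_before_Int_lessThan)
  show before: "{\<omega> \<in> space M. sums_avoid_before n K k t (cramer_set X \<omega>)} \<in> events"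
    using events_prefix[of "sums_avoid_before n K k t" t] by (simp only: prefix)
  show "{\<omega> \<in> space M. sums_avoid_before n K k t (cramer_set X \<omega>) \<and> \<not> X t \<omega>} \<in> events"
    if "3 \<le> t"
  proof -
    have "{\<omega> \<in> space M. \<not> X t \<omega>} \<in> events"
      using that by measurable
    with before have "{\<omega> \<in> space M. sums_avoid_before n K k t (cramer_set X \<omega>)}
        \<inter> {\<omega> \<in> space M. \<not> X t \<omega>} \<in> events"
      by (rule sets.Int)
    moreover have "{\<omega> \<in> space M. sums_avoid_before n K k t (cramer_set X \<omega>) \<and> \<not> X t \<omega>}
        = {\<omega> \<in> space M. sums_avoid_before n K k t (cramer_set X \<omega>)} \<inter> {\<omega> \<in> space M. \<not> X t \<omega>}"
      by blast
    ultimately show ?thesis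
      by simp
  qed
  show "prob {\<omega> \<in> space M. sums_avoid_before n K k t (cramer_set X \<omega>) \<and> \<not> X t \<omega>}
      = prob {\<omega> \<in> space M. sums_avoid_before n K k t (cramer_set X \<omega>)} * (1 - 1 / ln (real t))"
    if "3 \<le> t"
    using prob_prefix_not_X[OF that, of "sums_avoid_before n K k t"] by (simp only: prefix)
qed

lemma avoid_event_eq_UN:
  assumes "1 \<le> n" "3 \<le> k" "odd k" "K \<le> k"
  shows "avoid_event n K k =
    (\<Union>t\<in>{3..k ^ 8}. {\<omega> \<in> space M. sums_avoid_before n K k t (cramer_set X \<omega>) \<and> \<not> X t \<omega>})"
proof -
  have "sums_avoid n K k (cramer_set X \<omega>) \<longleftrightarrow>
      (\<exists>t\<in>{3..k ^ 8}. sums_avoid_before n K k t (cramer_set X \<omega>) \<and> \<not> X t \<omega>)" for \<omega>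
    using sums_avoid_iff_ex_before[OF assms cramer_set_subset[of X \<omega>]] by (auto simp: mem_cramer_set)
  then show ?thesis
    unfolding avoid_event_def by blast
qed

lemma events_avoid_event:
  assumes "1 \<le> n" "3 \<le> k" "odd k" "K \<le> k"
  shows "avoid_event n K k \<in> events"
  unfolding avoid_event_eq_UN[OF assms]
  using assms by (intro sets.finite_UN events_avoid_before_not_X) auto

lemma prob_avoid_event_step:
  assumes n: "1 \<le> n" and k: "odd k" "K + 2 \<le> k" and K: "3 \<le> K"
  shows "prob (avoid_event n K k) \<le> (1 - 1 / ln (real (k ^ 8))) * prob (avoid_event n K (k - 2))"
proof -
  let ?T = "{3..k ^ 8}" and ?c = "1 / ln (real (k ^ 8))"
  let ?before = "\<lambda>t. {\<omega> \<in> space M. sums_avoid_before n K k t (cramer_set X \<omega>)}"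
  let ?hit = "\<lambda>t. {\<omega> \<in> space M. sums_avoid_before n K k t (cramer_set X \<omega>) \<and> \<not> X t \<omega>}"
  have k3: "3 \<le> k" "2 \<le> k" "K \<le> k"
    using k K by auto
  have factor: "?c \<le> 1 / ln (real t)" if "t \<in> ?T" for t
    using that of_nat_le_iff[of t "k ^ 8"] by (intro inverse_ln_antimono) auto
  have "prob (avoid_event n K k) = prob (\<Union>t\<in>?T. ?hit t)"
    by (simp only: avoid_event_eq_UN[OF n k3(1) k(1) k3(3)])
  also have "\<dots> \<le> (\<Sum>t\<in>?T. prob (?hit t))"
    using events_avoid_before_not_X[OF n k3(2)] by (intro finite_measure_subadditive_finite) auto
  also have "\<dots> = (\<Sum>t\<in>?T. prob (?before t) * (1 - 1 / ln (real t)))"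
    using prob_avoid_before_not_X[OF n k3(2)] by (intro sum.cong) auto
  also have "\<dots> \<le> (\<Sum>t\<in>?T. prob (?before t) * (1 - ?c))"
    using factor by (intro sum_mono mult_left_mono diff_left_mono) auto
  also have "\<dots> = (1 - ?c) * prob (\<Union>t\<in>?T. ?before t)"
  proof -
    have "disjoint_family_on ?before ?T"
      unfolding disjoint_family_on_def sums_avoid_before_def by auto
    then have "prob (\<Union>t\<in>?T. ?before t) = (\<Sum>t\<in>?T. prob (?before t))"
      using events_avoid_before[OF n k3(2)] by (intro finite_measure_finite_Union) auto
    then show ?thesis
      by (simp add: sum_distrib_left mult.commute)
  qed
  also have "\<dots> \<le> (1 - ?c) * prob (avoid_event n K (k - 2))"
  proof (intro mult_left_mono finite_measure_mono)
    show "(\<Union>t\<in>?T. ?before t) \<subseteq> avoid_event n K (k - 2)"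
      unfolding avoid_event_def using sums_avoid_before_imp_sums_avoid[OF k3(2)] by blast
    show "avoid_event n K (k - 2) \<in> events"
      using k K n by (intro events_avoid_event) auto
    have "k \<le> k ^ 8"
      using k3 by (intro self_le_power) auto
    then have "3 \<in> ?T"
      using k3 by simp
    then have "?c \<le> 1 / ln 3"
      using factor[of 3] by simp
    moreover have "1 / ln (3 :: real) \<le> 1"
      using one_le_ln[of 3] by simp
    ultimately show "0 \<le> 1 - ?c"
      by linarith
  qed
  finally show ?thesis .
qed

lemma prob_avoid_event_le:
  assumes n: "1 \<le> n" and K: "odd K" "3 \<le> K"
  shows "prob (avoid_event n K (K + 2 * s)) \<le> exp (- harm s / (8 * real (K + 2)))"
proof (induction s)
  case 0
  show ?case
    by (simp add: harm_def)
next
  case (Suc s)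
  let ?k = "K + 2 * Suc s" and ?C = "8 * real (K + 2)"
  let ?c = "1 / ln (real (?k ^ 8))"
  have c: "1 / (?C * real (Suc s)) \<le> ?c"
  proof -
    have "?k \<le> (K + 2) * Suc s"
      by (simp add: algebra_simps)
    then have "real ?k \<le> real (K + 2) * real (Suc s)"
      by (metis of_nat_le_iff of_nat_mult)
    then have "8 * real ?k \<le> ?C * real (Suc s)"
      by (simp add: algebra_simps)
    then have "1 / (?C * real (Suc s)) \<le> 1 / (8 * real ?k)"
      by (intro divide_left_mono) auto
    also have "\<dots> \<le> 1 / ln (real ?k ^ 8)"
      using K inverse_le_inverse_ln_power[of "real ?k" 8] by simp
    finally show ?thesis
      by simp
  qed
  have "prob (avoid_event n K ?k) \<le> (1 - ?c) * prob (avoid_event n K (?k - 2))"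
    using K by (intro prob_avoid_event_step[OF n]) auto
  also have "?k - 2 = K + 2 * s"
    by simp
  also have "(1 - ?c) * prob (avoid_event n K (K + 2 * s)) \<le> exp (- ?c) * exp (- harm s / ?C)"
    using Suc.IH exp_ge_add_one_self[of "- ?c"] by (intro mult_mono) auto
  also have "\<dots> = exp (- harm s / ?C - ?c)"
    by (simp flip: exp_add)
  also have "\<dots> \<le> exp (- harm (Suc s) / ?C)"
  proof -
    have "harm (Suc s) / ?C = harm s / ?C + 1 / (?C * real (Suc s))"
      by (simp add: harm_Suc add_divide_distrib inverse_eq_divide mult.commute)
    then have "- harm s / ?C - ?c \<le> - harm (Suc s) / ?C"
      unfolding divide_minus_left using c by linarith
    then show ?thesis
      by simp
  qed
  finally show ?case .
qed

lemma INT_avoid_event_in_null_sets: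
  assumes "1 \<le> n" "odd K" "3 \<le> K"
  shows "(\<Inter>s. avoid_event n K (K + 2 * s)) \<in> null_sets M"
proof -
  let ?Z = "\<Inter>s. avoid_event n K (K + 2 * s)" and ?C = "8 * real (K + 2)"
  have events: "avoid_event n K (K + 2 * s) \<in> events" for s
    using assms by (intro events_avoid_event) auto
  then have Z: "?Z \<in> events"
    by (intro sets.countable_INT) auto
  have bound: "prob ?Z \<le> exp (- harm s / ?C)" for s
  proof -
    have "prob ?Z \<le> prob (avoid_event n K (K + 2 * s))"
      by (rule finite_measure_mono[OF _ events]) blast
    then show ?thesis
      using prob_avoid_event_le[OF assms, of s] by linarith
  qed
  have "LIM s sequentially. harm s / ?C :> at_top"
    using filterlim_tendsto_pos_mult_at_top[OF tendsto_const _ harm_at_top, of "1 / ?C"]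
    by (simp add: divide_inverse_commute)
  then have "LIM s sequentially. - (harm s / ?C) :> at_bot"
    by (simp only: filterlim_uminus_at_top)
  then have "(\<lambda>s. exp (- harm s / ?C)) \<longlonglongrightarrow> 0"
    using filterlim_compose[OF exp_at_bot] by simp
  then have "prob ?Z \<le> 0"
    using bound by (intro LIMSEQ_le_const) auto
  then show ?thesis
    using Z by (simp add: emeasure_eq_measure null_sets_def measure_le_0_iff)
qed

lemma AE_escapes_avoidance:
  "AE \<omega> in M. \<forall>n K. 1 \<le> n \<longrightarrow> odd K \<longrightarrow> 3 \<le> K \<longrightarrow>
     (\<exists>s. \<not> sums_avoid n K (K + 2 * s) (cramer_set X \<omega>))"
proof -
  have "AE \<omega> in M. 1 \<le> n \<longrightarrow> odd K \<longrightarrow> 3 \<le> K \<longrightarrow>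
      (\<exists>s. \<not> sums_avoid n K (K + 2 * s) (cramer_set X \<omega>))" for n K
  proof (cases "1 \<le> n \<and> odd K \<and> 3 \<le> K")
    case True
    then show ?thesis
      by (intro AE_I'[OF INT_avoid_event_in_null_sets]) (auto simp: avoid_event_def)
  qed auto
  then show ?thesis
    by (simp add: AE_all_countable)
qed

end

theorem mainTheorem2:
  fixes M :: "'a measure" and X :: "nat \<Rightarrow> 'a \<Rightarrow> bool"
  assumes "prob_space M"
    and "prob_space.indep_vars M (\<lambda>_. count_space UNIV) X {3..}"
    and "\<And>m. 3 \<le> m \<Longrightarrow> prob_space.prob M {\<omega> \<in> space M. X m \<omega>} = 1 / ln (real m)"
  shows "AE \<omega> in M. infinite (cramer_set X \<omega>) \<and>
           (\<forall>n\<ge>1. \<exists>k. odd k \<and> 3 \<le> k \<and> cramer_T (cramer_set X \<omega>) k n \<in> cramer_set X \<omega>)"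
proof -
  interpret cramer_model M X
    using assms by (simp add: cramer_model_def cramer_model_axioms_def)
  have "AE \<omega> in M. (\<exists>J. meets_blocks_from J (cramer_set X \<omega>)) \<and>
      (\<forall>n K. 1 \<le> n \<longrightarrow> odd K \<longrightarrow> 3 \<le> K \<longrightarrow> (\<exists>s. \<not> sums_avoid n K (K + 2 * s) (cramer_set X \<omega>)))"
    by (intro AE_conjI AE_meets_blocks AE_escapes_avoidance)
  then show ?thesis
  proof (rule eventually_mono, elim conjE exE)
    fix \<omega> J
    let ?P = "cramer_set X \<omega>"
    assume blocks: "meets_blocks_from J ?P"
      and escapes: "\<forall>n K. 1 \<le> n \<longrightarrow> odd K \<longrightarrow> 3 \<le> K \<longrightarrow> (\<exists>s. \<not> sums_avoid n K (K + 2 * s) ?P)"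
    have "\<exists>k. odd k \<and> 3 \<le> k \<and> cramer_T ?P k n \<in> ?P" if n: "1 \<le> n" for n
    proof (rule ccontr)
      assume "\<nexists>k. odd k \<and> 3 \<le> k \<and> cramer_T ?P k n \<in> ?P"
      then have "sums_avoid n (2 * (n + J) + 65) k ?P" for k
        by (intro sums_avoid_if_no_sum_in[OF blocks n]) blast
      then show False
        using escapes[rule_format, OF n, of "2 * (n + J) + 65"] by simp
    qed
    then show "infinite ?P \<and> (\<forall>n\<ge>1. \<exists>k. odd k \<and> 3 \<le> k \<and> cramer_T ?P k n \<in> ?P)"
      using infinite_if_meets_blocks[OF blocks] by blast
  qed
qed

end
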